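(* Let $m\ge1$, $\tilde{\mathbf{x}}\in\mathbb{R}^m$, $\hat{\mathbf{b}}\in\Delta_m:=\{\mathbf{b}\in\mathbb{R}^m:\mathbf{b}\ge\mathbf{0},\ \mathbf{b}^\top\mathbf{1}=1\}$, $\lambda>0$, $0\le\gamma<1$, $\kappa\ge 0$, and let $\boldsymbol{\Sigma}\in\mathbb{R}^{m\times m}$ be symmetric positive definite with Cholesky factorization $\boldsymbol{\Sigma}=\mathbf{U}^\top\mathbf{U}$ ($\mathbf{U}$ upper triangular). Let $\sigma=\sqrt{\sum_{i=1}^m\sigma_i^2}$ where $\sigma_i^2$ are the diagonal entries of $\boldsymbol{\Sigma}$, and assume $\max_i \tilde{x}_i>\kappa\sigma+\lambda$. Define the ellipsoid $\mathcal{U}=\{\mathbf{x}\in\mathbb{R}^m:(\mathbf{x}-\tilde{\mathbf{x}})^\top\boldsymbol{\Sigma}^{-1}(\mathbf{x}-\tilde{\mathbf{x}})\le\kappa^2\}$ and the robust problem $$\text{(R)}\qquad \max_{w\ge0,\ \mathbf{b}\ge\mathbf{0}}\ \min_{\mathbf{x}\in\mathcal{U}}\{w\,\mathbf{b}^\top\mathbf{x}\}-\lambda\|\hat{\mathbf{b}}-w\mathbf{b}\|_1\quad\text{s.t.}\quad w+\gamma\|\hat{\mathbf{b}}-w\mathbf{b}\|_1=1,\ \ \mathbf{b}^\top\mathbf{1}=1,$$ and the second-order cone program $$\text{(S)}\qquad \max_{\mathbf{b}\ge\mathbf{0}}\ \mathbf{b}^\top\tilde{\mathbf{x}}-\lambda\|\hat{\mathbf{b}}-\mathbf{b}\|_1-\kappa\|\mathbf{U}\mathbf{b}\|_2\quad\text{s.t.}\quad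 \mathbf{b}^\top\mathbf{1}+\gamma\|\hat{\mathbf{b}}-\mathbf{b}\|_1\le1 .$$ Let $\mathbf{b}^*$ be an optimal solution of (S). Then $\big(\mathbf{1}^\top\mathbf{b}^*,\ \mathbf{b}^*/\mathbf{1}^\top\mathbf{b}^*\big)$ is an optimal solution of (R).
   Context: $\|\cdot\|_1,\|\cdot\|_2$ are the $\ell_1$ and Euclidean norms, $\mathbf{1}$ the all-ones vector, vector inequalities componentwise. $\tilde{\mathbf{x}}$ plays the role of a predicted price-relative vector, $\gamma$ a proportional transaction cost rate, $\lambda$ a rebalancing penalty and $\kappa$ the size of the uncertainty set. *)

theory Defs
  imports "HOL-Analysis.Analysis"
begin

definition l1norm :: "real ^ 'n \<Rightarrow> real" where
  "l1norm v = (\<Sum>i\<in>UNIV. \<bar>v $ i\<bar>)"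

definition nonneg_vec :: "real ^ 'n \<Rightarrow> bool" where
  "nonneg_vec v \<longleftrightarrow> (\<forall>i. 0 \<le> v $ i)"

definition vsum :: "real ^ 'n \<Rightarrow> real" where
  "vsum v = (\<Sum>i\<in>UNIV. v $ i)"

definition sym_pos_def :: "real ^ 'n ^ 'n \<Rightarrow> bool" where
  "sym_pos_def S \<longleftrightarrow> transpose S = S \<and> (\<forall>x. x \<noteq> 0 \<longrightarrow> x \<bullet> (S *v x) > 0)"

definition upper_triangular :: "real ^ ('k::{finite,linorder}) ^ ('k::{finite,linorder}) \<Rightarrow> bool" where
  "upper_triangular U \<longleftrightarrow> (\<forall>i j. j < i \<longrightarrow> U $ i $ j = 0)"

definition ellipsoid :: "real ^ 'n \<Rightarrow> real ^ 'n ^ 'n \<Rightarrow> real \<Rightarrow> (real ^ 'n) set" where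
  "ellipsoid xt S kap = {x. (x - xt) \<bullet> (matrix_inv S *v (x - xt)) \<le> kap\<^sup>2}"

definition R_feasible :: "real ^ 'n \<Rightarrow> real \<Rightarrow> real \<Rightarrow> real ^ 'n \<Rightarrow> bool" where
  "R_feasible bh gam w b \<longleftrightarrow> 0 \<le> w \<and> nonneg_vec b \<and>
     w + gam * l1norm (bh - w *\<^sub>R b) = 1 \<and> vsum b = 1"

definition R_obj :: "real ^ 'n \<Rightarrow> real ^ 'n ^ 'n \<Rightarrow> real \<Rightarrow> real ^ 'n \<Rightarrow> real \<Rightarrow> real \<Rightarrow> real ^ 'n \<Rightarrow> real" where
  "R_obj xt S kap bh lam w b =
     (INF x\<in>ellipsoid xt S kap. w * (b \<bullet> x)) - lam * l1norm (bh - w *\<^sub>R b)"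

definition R_optimal where
  "R_optimal xt S kap bh lam gam w b \<longleftrightarrow> R_feasible bh gam w b \<and>
     (\<forall>w' b'. R_feasible bh gam w' b' \<longrightarrow> R_obj xt S kap bh lam w' b' \<le> R_obj xt S kap bh lam w b)"

definition S_feasible :: "real ^ 'n \<Rightarrow> real \<Rightarrow> real ^ 'n \<Rightarrow> bool" where
  "S_feasible bh gam b \<longleftrightarrow> nonneg_vec b \<and> vsum b + gam * l1norm (bh - b) \<le> 1"

definition S_obj :: "real ^ 'n \<Rightarrow> real ^ 'n ^ 'n \<Rightarrow> real \<Rightarrow> real ^ 'n \<Rightarrow> real \<Rightarrow> real ^ 'n \<Rightarrow> real" where
  "S_obj xt U kap bh lam b = b \<bullet> xt - lam * l1norm (bh - b) - kap * norm (U *v b)"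

definition S_optimal where
  "S_optimal xt U kap bh lam gam b \<longleftrightarrow> S_feasible bh gam b \<and>
     (\<forall>b'. S_feasible bh gam b' \<longrightarrow> S_obj xt U kap bh lam b' \<le> S_obj xt U kap bh lam b)"

end

theory Submission
  imports Defs
begin

text \<open>For \<open>S = U\<^sup>T U\<close> the ellipsoid is \<open>x\<^sub>t + S {z. \<parallel>U z\<parallel> \<le> \<kappa>}\<close>, and
  \<open>c \<bullet> S z = U c \<bullet> U z\<close>, so by Cauchy-Schwarz the worst case of the linear return \<open>c \<bullet> x\<close>
  over it is \<open>c \<bullet> x\<^sub>t - \<kappa> \<parallel>U c\<parallel>\<close>. Hence the objective of (R) at \<open>(w, b)\<close> is that of (S) at
  \<open>w b\<close>, and every feasible point of (R) gives a feasible point \<open>w b\<close> of (S). Conversely, an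
  optimum \<open>b\<^sup>*\<close> of (S) exhausts the budget: otherwise, buying a little more of an asset \<open>i\<close>
  with \<open>x\<^sub>t i > \<kappa> \<sigma> + \<lambda>\<close> costs at most \<open>\<lambda> + \<kappa> \<sigma>\<close> per unit in penalty and risk and strictly
  improves the objective. A tight budget forces \<open>1\<^sup>T b\<^sup>* > 0\<close> (as \<open>\<gamma> < 1\<close>), and then
  \<open>(1\<^sup>T b\<^sup>*, b\<^sup>*/1\<^sup>T b\<^sup>*)\<close> is feasible for (R) with the optimal value of (S).\<close>

lemma matrix_inv_mult:
  fixes A :: "real^'n^'n"
  assumes "invertible A"
  shows "A ** matrix_inv A = mat 1" "matrix_inv A ** A = mat 1"
  using someI_ex[OF assms[unfolded invertible_def]] unfolding matrix_inv_def by auto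

lemma sym_pos_def_invertible:
  assumes "sym_pos_def S"
  shows "invertible S"
  unfolding invertible_left_inverse matrix_left_invertible_ker
  using assms unfolding sym_pos_def_def by force

lemma inner_gram_mult:
  fixes U :: "real^'n^'n"
  shows "((transpose U ** U) *v z) \<bullet> w = (U *v z) \<bullet> (U *v w)"
proof -
  have "(transpose U ** U) *v z = transpose U *v (U *v z)"
    by (simp add: matrix_vector_mul_assoc)
  also have "\<dots> = (U *v z) v* U"
    using vector_transpose_matrix[of "U *v z" "transpose U"] by simp
  finally show ?thesis
    by (simp add: dot_lmul_matrix)
qed

lemma gram_diagonal:
  fixes U :: "real^'n^'n"
  shows "(transpose U ** U) $ i $ i = (norm (U *v axis i 1))\<^sup>2"
  by (simp add: power2_norm_eq_inner flip: inner_gram_mult)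
     (simp add: inner_axis matrix_vector_mult_basis column_def)

lemma norm_mult_axis_le_sqrt_trace:
  fixes U :: "real^'n^'n"
  shows "norm (U *v axis i 1) \<le> sqrt (\<Sum>j\<in>UNIV. (transpose U ** U) $ j $ j)"
proof -
  have "norm (U *v axis i 1) = sqrt ((transpose U ** U) $ i $ i)"
    by (simp add: gram_diagonal)
  also have "\<dots> \<le> sqrt (\<Sum>j\<in>UNIV. (transpose U ** U) $ j $ j)"
    by (intro real_sqrt_le_mono member_le_sum) (auto simp: gram_diagonal)
  finally show ?thesis .
qed

lemma inner_ellipsoid_lower_bound:
  fixes U :: "real^'n^'n"
  assumes "invertible (transpose U ** U)" "0 \<le> kap"
    and "x \<in> ellipsoid xt (transpose U ** U) kap"
  shows "c \<bullet> xt - kap * norm (U *v c) \<le> c \<bullet> x"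
proof -
  let ?S = "transpose U ** U"
  define z where "z = matrix_inv ?S *v (x - xt)"
  have Sz: "?S *v z = x - xt"
    by (simp add: z_def matrix_vector_mul_assoc matrix_inv_mult[OF assms(1)])
  have "(x - xt) \<bullet> z = (U *v z) \<bullet> (U *v z)"
    using inner_gram_mult[of U z z] Sz by simp
  then have "(norm (U *v z))\<^sup>2 \<le> kap\<^sup>2"
    using assms(3) by (simp add: ellipsoid_def power2_norm_eq_inner flip: z_def)
  then have "norm (U *v z) \<le> kap"
    using assms(2) by (meson norm_ge_zero power2_le_imp_le)
  then have "\<bar>(U *v z) \<bullet> (U *v c)\<bar> \<le> kap * norm (U *v c)"
    by (meson Cauchy_Schwarz_ineq2 mult_right_mono norm_ge_zero order_trans)
  moreover have "c \<bullet> (x - xt) = (U *v z) \<bullet> (U *v c)"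
    using inner_gram_mult[of U z c] Sz by (simp add: inner_commute)
  ultimately show ?thesis
    by (simp add: inner_diff_right)
qed

lemma inner_ellipsoid_bound_attained:
  fixes U :: "real^'n^'n"
  assumes "invertible (transpose U ** U)"
  shows "\<exists>x\<in>ellipsoid xt (transpose U ** U) kap. c \<bullet> x = c \<bullet> xt - kap * norm (U *v c)"
proof (cases "U *v c = 0")
  case True
  then show ?thesis
    by (intro bexI[of _ xt]) (auto simp: ellipsoid_def)
next
  case False
  let ?S = "transpose U ** U"
  define z where "z = (- kap / norm (U *v c)) *\<^sub>R c"
  have Uz: "U *v z = (- kap / norm (U *v c)) *\<^sub>R (U *v c)"
    unfolding z_def by (rule matrix_vector_mult_scaleR)
  have "(?S *v z) \<bullet> z = kap\<^sup>2"
    using False by (simp add: inner_gram_mult Uz power2_norm_eq_inner[symmetric] power2_eq_square)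
  moreover have "c \<bullet> (?S *v z) = - kap * norm (U *v c)"
    using False
    by (simp add: inner_commute[of c] inner_gram_mult Uz power2_norm_eq_inner[symmetric] power2_eq_square)
  moreover have "matrix_inv ?S *v (?S *v z) = z"
    by (simp add: matrix_vector_mul_assoc matrix_inv_mult[OF assms])
  ultimately show ?thesis
    by (intro bexI[of _ "xt + ?S *v z"]) (auto simp: ellipsoid_def inner_add_right inner_commute)
qed

lemma Inf_inner_ellipsoid:
  fixes U :: "real^'n^'n"
  assumes "invertible (transpose U ** U)" "0 \<le> kap"
  shows "(INF x\<in>ellipsoid xt (transpose U ** U) kap. c \<bullet> x) = c \<bullet> xt - kap * norm (U *v c)"
proof (rule cInf_eq_minimum)
  show "c \<bullet> xt - kap * norm (U *v c) \<in> (\<bullet>) c ` ellipsoid xt (transpose U ** U) kap"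
    using inner_ellipsoid_bound_attained[OF assms(1)] by (metis image_eqI)
qed (use inner_ellipsoid_lower_bound[OF assms] in auto)

lemma l1norm_triangle: "l1norm (x + y) \<le> l1norm x + l1norm y"
  unfolding l1norm_def by (simp add: sum.distrib[symmetric] sum_mono abs_triangle_ineq)

lemma l1norm_uminus [simp]: "l1norm (- x) = l1norm x"
  by (simp add: l1norm_def)

lemma l1norm_axis [simp]: "l1norm (axis i t) = \<bar>t\<bar>"
proof -
  have "(\<Sum>j\<in>UNIV. \<bar>axis i t $ j\<bar>) = (\<Sum>j\<in>UNIV. if j = i then \<bar>t\<bar> else 0)"
    by (rule sum.cong) (auto simp: axis_def)
  then show ?thesis
    by (simp add: l1norm_def)
qed

lemma l1norm_diff_axis_le: "l1norm (x - axis i t) \<le> l1norm x + \<bar>t\<bar>"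
  using l1norm_triangle[of x "- axis i t"] by simp

lemma vsum_add: "vsum (x + y) = vsum x + vsum y"
  by (simp add: vsum_def sum.distrib)

lemma vsum_scaleR: "vsum (c *\<^sub>R x) = c * vsum x"
  by (simp add: vsum_def sum_distrib_left)

lemma vsum_axis [simp]: "vsum (axis i t) = t"
  by (simp add: vsum_def axis_def)

lemma vsum_pos_iff:
  assumes "nonneg_vec x"
  shows "0 < vsum x \<longleftrightarrow> x \<noteq> 0"
  using assms unfolding vsum_def nonneg_vec_def
  by (auto simp: vec_eq_iff sum_nonneg_eq_0_iff less_le sum_nonneg)

lemma S_feasible_add_axis:
  assumes "S_feasible bh gam b" "0 \<le> gam" "0 \<le> t"
    and "vsum b + gam * l1norm (bh - b) + (1 + gam) * t \<le> 1"
  shows "S_feasible bh gam (b + axis i t)"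
proof -
  have "l1norm (bh - (b + axis i t)) \<le> l1norm (bh - b) + t"
    using l1norm_diff_axis_le[of "bh - b" i t] \<open>0 \<le> t\<close> by (simp add: diff_diff_eq)
  then have "gam * l1norm (bh - (b + axis i t)) \<le> gam * l1norm (bh - b) + gam * t"
    using \<open>0 \<le> gam\<close> by (metis distrib_left mult_left_mono)
  moreover have "nonneg_vec (b + axis i t)"
    using assms(1,3) by (auto simp: S_feasible_def nonneg_vec_def axis_def)
  ultimately show ?thesis
    using assms(4) by (simp add: S_feasible_def vsum_add algebra_simps)
qed

lemma S_obj_add_axis_ge:
  fixes U :: "real^'n^'n"
  assumes "0 \<le> lam" "0 \<le> kap" "0 \<le> t"
  shows "S_obj xt U kap bh lam b + t * (xt $ i - lam - kap * norm (U *v axis i 1))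
           \<le> S_obj xt U kap bh lam (b + axis i t)"
proof -
  have "l1norm (bh - (b + axis i t)) \<le> l1norm (bh - b) + t"
    using l1norm_diff_axis_le[of "bh - b" i t] \<open>0 \<le> t\<close> by (simp add: diff_diff_eq)
  then have "lam * l1norm (bh - (b + axis i t)) \<le> lam * l1norm (bh - b) + lam * t"
    using \<open>0 \<le> lam\<close> by (metis distrib_left mult_left_mono)
  moreover have "axis i t = t *\<^sub>R axis i (1::real)"
    by (simp add: vec_eq_iff axis_def)
  then have "norm (U *v (b + axis i t)) \<le> norm (U *v b) + t * norm (U *v axis i 1)"
    using \<open>0 \<le> t\<close>
    by (metis matrix_vector_right_distrib matrix_vector_mult_scaleR norm_scaleR
        norm_triangle_ineq abs_of_nonneg)
  then have "kap * norm (U *v (b + axis i t)) \<le> kap * norm (U *v b) + kap * (t * norm (U *v axis i 1))"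
    using \<open>0 \<le> kap\<close> by (metis distrib_left mult_left_mono)
  ultimately show ?thesis
    by (simp add: S_obj_def inner_add_left inner_axis' algebra_simps)
qed

lemma S_optimal_budget_tight:
  fixes U :: "real^'n^'n"
  assumes opt: "S_optimal xt U kap bh lam gam b"
    and "0 \<le> gam" "gam \<le> 1" "0 \<le> lam" "0 \<le> kap"
    and gain: "kap * norm (U *v axis i 1) + lam < xt $ i"
  shows "vsum b + gam * l1norm (bh - b) = 1"
proof (rule ccontr)
  assume "vsum b + gam * l1norm (bh - b) \<noteq> 1"
  then have slack: "vsum b + gam * l1norm (bh - b) < 1"
    using opt by (simp add: S_optimal_def S_feasible_def)
  define t where "t = (1 - (vsum b + gam * l1norm (bh - b))) / 2"
  have "0 < t"
    using slack by (simp add: t_def)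
  have "S_feasible bh gam (b + axis i t)"
  proof (rule S_feasible_add_axis)
    have "(1 + gam) * t \<le> 2 * t"
      using \<open>0 < t\<close> \<open>gam \<le> 1\<close> by (simp add: mult_right_mono)
    then show "vsum b + gam * l1norm (bh - b) + (1 + gam) * t \<le> 1"
      by (simp add: t_def)
  qed (use opt \<open>0 \<le> gam\<close> \<open>0 < t\<close> in \<open>auto simp: S_optimal_def\<close>)
  then have "S_obj xt U kap bh lam (b + axis i t) \<le> S_obj xt U kap bh lam b"
    using opt by (simp add: S_optimal_def)
  moreover have "0 < t * (xt $ i - lam - kap * norm (U *v axis i 1))"
    using \<open>0 < t\<close> gain by simp
  moreover have "S_obj xt U kap bh lam b + t * (xt $ i - lam - kap * norm (U *v axis i 1))
                    \<le> S_obj xt U kap bh lam (b + axis i t)"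
    by (rule S_obj_add_axis_ge) (use \<open>0 \<le> lam\<close> \<open>0 \<le> kap\<close> \<open>0 < t\<close> in auto)
  ultimately show False
    by linarith
qed

lemma vsum_pos_if_budget_tight:
  assumes "nonneg_vec bh" "vsum bh = 1" "gam < 1" "nonneg_vec b"
    and "vsum b + gam * l1norm (bh - b) = 1"
  shows "0 < vsum b"
proof (rule ccontr)
  assume "\<not> 0 < vsum b"
  then have "b = 0"
    using vsum_pos_iff[OF assms(4)] by blast
  moreover have "l1norm bh = vsum bh"
    using assms(1) by (simp add: l1norm_def vsum_def nonneg_vec_def)
  ultimately show False
    using assms(2,3,5) by (simp add: vsum_def)
qed

lemma R_obj_eq_S_obj:
  fixes U :: "real^'n^'n"
  assumes "invertible (transpose U ** U)" "0 \<le> kap"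
  shows "R_obj xt (transpose U ** U) kap bh lam w b = S_obj xt U kap bh lam (w *\<^sub>R b)"
proof -
  have "R_obj xt (transpose U ** U) kap bh lam w b
      = (INF x\<in>ellipsoid xt (transpose U ** U) kap. (w *\<^sub>R b) \<bullet> x) - lam * l1norm (bh - w *\<^sub>R b)"
    by (simp add: R_obj_def)
  also have "\<dots> = S_obj xt U kap bh lam (w *\<^sub>R b)"
    unfolding Inf_inner_ellipsoid[OF assms] S_obj_def by (simp add: inner_commute)
  finally show ?thesis .
qed

lemma R_feasible_imp_S_feasible:
  assumes "R_feasible bh gam w b"
  shows "S_feasible bh gam (w *\<^sub>R b)"
  using assms by (auto simp: R_feasible_def S_feasible_def nonneg_vec_def vsum_scaleR)

lemma R_feasible_normalize:
  assumes "nonneg_vec b" "0 < vsum b" "vsum b + gam * l1norm (bh - b) = 1"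
  shows "R_feasible bh gam (vsum b) ((1 / vsum b) *\<^sub>R b)"
  using assms by (auto simp: R_feasible_def nonneg_vec_def vsum_scaleR)

theorem theorem2:
  fixes xt bh bs :: "real ^ 'n::{finite,linorder}"
    and S U :: "real ^ ('n::{finite,linorder}) ^ ('n::{finite,linorder})"
    and lam gam kap :: real
  assumes bh_simplex: "nonneg_vec bh" "vsum bh = 1"
    and lam_pos: "lam > 0"
    and gam_rng: "0 \<le> gam" "gam < 1"
    and kap_nn: "kap \<ge> 0"
    and S_pd: "sym_pos_def S"
    and chol: "S = transpose U ** U" "upper_triangular U"
    and big: "Max ((\<lambda>i. xt $ i) ` UNIV) > kap * sqrt (\<Sum>i\<in>UNIV. S $ i $ i) + lam"
    and opt: "S_optimal xt U kap bh lam gam bs"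
  shows "R_optimal xt S kap bh lam gam (vsum bs) ((1 / vsum bs) *\<^sub>R bs)"
proof -
  have inv: "invertible (transpose U ** U)"
    using sym_pos_def_invertible[OF S_pd] chol(1) by simp
  have "Max ((\<lambda>i. xt $ i) ` UNIV) \<in> (\<lambda>i. xt $ i) ` UNIV"
    by (rule Max_in) auto
  then obtain i where "xt $ i = Max ((\<lambda>i. xt $ i) ` UNIV)"
    by (metis imageE)
  then have "kap * norm (U *v axis i 1) + lam < xt $ i"
    using big chol(1) norm_mult_axis_le_sqrt_trace[of U i] mult_left_mono[OF _ kap_nn] by fastforce
  then have tight: "vsum bs + gam * l1norm (bh - bs) = 1"
    using S_optimal_budget_tight opt gam_rng lam_pos kap_nn by fastforce
  have bs_nonneg: "nonneg_vec bs"
    using opt by (simp add: S_optimal_def S_feasible_def)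
  have "0 < vsum bs"
    by (rule vsum_pos_if_budget_tight[OF bh_simplex gam_rng(2) bs_nonneg tight])
  then have rescale: "vsum bs *\<^sub>R ((1 / vsum bs) *\<^sub>R bs) = bs"
    by simp
  show ?thesis
    unfolding R_optimal_def chol(1) R_obj_eq_S_obj[OF inv kap_nn] rescale
    using R_feasible_normalize[OF bs_nonneg \<open>0 < vsum bs\<close> tight] opt
    by (auto simp: S_optimal_def dest: R_feasible_imp_S_feasible)
qed

end
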